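(* (i) If $y\in\mathcal{SH}(r)$ satisfies $P_1(y)\ne0$ and $P_2(y)\ne0$, then $$\rho(G)y=\{y'\in\mathcal{SH}(r):\ P_1(y)P_1(y')>0\ \text{and}\ P_2(y)P_2(y')>0\}.$$ (ii) Consequently $(G,\rho,\mathcal{SH}(r))$ is a prehomogeneous vector space (it has an open $\rho(G)$-orbit) and its singular set, the complement of the union of the open orbits, is $\Sigma=\{y\in\mathcal{SH}(r):P_1(y)P_2(y)=0\}$.
   Context: Fix an integer $r\ge 2$. For $\ell=1,\dots,r+1$ let $Y_\ell\in\mathrm{Mat}(r,\mathbb R)$ have $(i,j)$-entry $\delta_{i+j,\ell+1}$. Let $\mathcal{SH}(r)=\mathrm{span}_{\mathbb R}(Y_1,\dots,Y_{r+1})$, the space of sub-Hankel matrices: $y=\sum_\ell y_\ell Y_\ell$ is the $r\times r$ matrix whose $(i,j)$-entry is $y_{i+j-1}$ if $i+j\le r+2$ and $0$ otherwise. For $k=0,\dots,r-1$ let $T_k$ be the $r\times r$ matrix with $(i,j)$-entry $(r-k-i+1)\delta_{j,i+k}$. Put $H_1=\frac1rT_0-\frac12I_r$, $H_2=I_r-\frac1rT_0=\mathrm{diag}(0,\frac1r,\dots,\frac{r-1}r)$. Let $\mathfrak g=\mathrm{span}(H_1,H_2,T_1,\dots,T_{r-1})$ (a solvable Lie algebra of upper triangular matrices) and $G\subset GL(r,\mathbb R)$ the connected Lie subgroup with Lie algebra $\mathfrak g$. Define $\rho(g)y=g\,y\,{}^tg$ for $g\in G$, $y\in\mathcal{SH}(r)$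 (this preserves $\mathcal{SH}(r)$). Let $P_1(y)=\det y$ and $P_2(y)=y_{r+1}$. *)

theory Defs
  imports "Jordan_Normal_Form.Determinant"
begin

(* All matrices are r x r real matrices of Jordan_Normal_Form, with 0-based indices:
   paper entry (i,j) (1-based) is  A $$ (i-1, j-1). *)

(* Sub-Hankel matrix with coordinates y_1,...,y_{r+1}: 1-based (i,j)-entry y_{i+j-1}
   if i+j <= r+2, else 0.  0-based: entry c (i+j+1) if i+j <= r. *)
definition sh :: "nat \<Rightarrow> (nat \<Rightarrow> real) \<Rightarrow> real mat" where
  "sh r c = mat r r (\<lambda>(i,j). if i + j \<le> r then c (i + j + 1) else 0)"

definition SH :: "nat \<Rightarrow> real mat set" where
  "SH r = {sh r c | c. True}"

(* P_1(y) = det y ;  P_2(y) = y_{r+1}, which is the 1-based (2,r) entry of y *)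
definition P1 :: "real mat \<Rightarrow> real" where
  "P1 y = det y"

definition P2 :: "nat \<Rightarrow> real mat \<Rightarrow> real" where
  "P2 r y = y $$ (1, r - 1)"

(* T_k: 1-based (i,j)-entry (r-k-i+1) delta_{j,i+k}; 0-based (r-k-i) delta_{j,i+k} *)
definition Tm :: "nat \<Rightarrow> nat \<Rightarrow> real mat" where
  "Tm r k = mat r r (\<lambda>(i,j). if j = i + k then real r - real k - real i else 0)"

definition H1 :: "nat \<Rightarrow> real mat" where
  "H1 r = mat r r (\<lambda>(i,j). (1 / real r) * Tm r 0 $$ (i,j) - (1/2) * (1\<^sub>m r) $$ (i,j))"

definition H2 :: "nat \<Rightarrow> real mat" where
  "H2 r = mat r r (\<lambda>(i,j). (1\<^sub>m r) $$ (i,j) - (1 / real r) * Tm r 0 $$ (i,j))"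

definition gLie :: "nat \<Rightarrow> real mat set" where
  "gLie r = {mat r r (\<lambda>(i,j). a * H1 r $$ (i,j) + b * H2 r $$ (i,j)
                     + (\<Sum>k\<in>{1..<r}. c k * Tm r k $$ (i,j))) | a b c. True}"

definition mexp :: "real mat \<Rightarrow> real mat" where
  "mexp A = mat (dim_row A) (dim_col A) (\<lambda>(i,j). \<Sum>n. (A ^\<^sub>m n) $$ (i,j) / fact n)"

(* the connected Lie subgroup G with Lie algebra g: the subgroup of GL(r,R)
   generated by exp(g), i.e. all finite products exp(X_1)...exp(X_k), X_i in g *)
inductive_set Ggrp :: "nat \<Rightarrow> real mat set" for r where
  one: "1\<^sub>m r \<in> Ggrp r"
| step: "X \<in> gLie r \<Longrightarrow> A \<in> Ggrp r \<Longrightarrow> mexp X * A \<in> Ggrp r"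

definition rho :: "real mat \<Rightarrow> real mat \<Rightarrow> real mat" where
  "rho g y = g * y * transpose_mat g"

definition orbit :: "nat \<Rightarrow> real mat \<Rightarrow> real mat set" where
  "orbit r y = (\<lambda>g. rho g y) ` Ggrp r"

(* openness of a subset of SH(r) (a finite-dim real vector space, topologized by the
   entrywise max-norm, equivalent to the Euclidean topology) *)
definition open_SH :: "nat \<Rightarrow> real mat set \<Rightarrow> bool" where
  "open_SH r U \<longleftrightarrow> U \<subseteq> SH r \<and>
     (\<forall>y\<in>U. \<exists>e>0. \<forall>y'\<in>SH r.
        (\<forall>i<r. \<forall>j<r. \<bar>y' $$ (i,j) - y $$ (i,j)\<bar> < e) \<longrightarrow> y' \<in> U)"

end

theory Submission
  imports Defs "Jordan_Normal_Form.Char_Poly"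
begin

text \<open>
  The Lie algebra acts on sub-Hankel matrices through the derivation \<open>y \<mapsto> X y + y X\<^sup>T\<close>, which is
  explicit in the coordinates \<open>y\<^sub>1, \<dots>, y\<^bsub>r+1\<^esub>\<close>; writing \<open>exp X \<cdot> y \<cdot> exp X\<^sup>T\<close> as a Cauchy
  product shows that \<open>\<rho>(exp X)\<close> is the exponential of this derivation. Hence every \<open>g \<in> G\<close>
  preserves \<open>SH(r)\<close>, multiplies \<open>y\<^bsub>r+1\<^esub>\<close> by a positive factor and \<open>det y\<close> by \<open>(det g)\<^sup>2 > 0\<close>,
  so the set where \<open>P\<^sub>1\<close> and \<open>P\<^sub>2\<close> have prescribed nonzero signs is a union of orbits.
  Conversely, if \<open>y\<^bsub>r+1\<^esub> \<noteq> 0\<close> the unipotent elements \<open>exp (t T\<^sub>k)\<close> clear \<open>y\<^sub>r, \<dots>, y\<^sub>2\<close> one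
  at a time and a diagonal element of \<open>G\<close> rescales \<open>y\<^sub>1\<close> and \<open>y\<^bsub>r+1\<^esub>\<close> to \<open>\<plusminus>1\<close>; as these signs
  are those of \<open>P\<^sub>1\<close> and \<open>P\<^sub>2\<close>, each sign set is a single orbit, open by continuity.
  An orbit meeting \<open>P\<^sub>1 P\<^sub>2 = 0\<close> lies in that hypersurface and so is not open, since regular
  points are dense: for the involution \<open>J\<close> with \<open>y\<^sub>1 = y\<^bsub>r+1\<^esub> = 1\<close>, \<open>det (z + t J)\<close> is
  \<open>det J\<close> times the characteristic polynomial of \<open>-J z\<close> evaluated at \<open>t\<close>.
\<close>

section \<open>Matrix powers and the matrix exponential\<close>

lemma index_mult_mat_sum:
  fixes A B :: "'a::comm_semiring_0 mat"
  assumes "A \<in> carrier_mat n k" "B \<in> carrier_mat k m" "i < n" "j < m"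
  shows "(A * B) $$ (i,j) = (\<Sum>c<k. A $$ (i,c) * B $$ (c,j))"
  using assms by (auto simp: scalar_prod_def lessThan_atLeast0 intro!: sum.cong)

lemma index_mult3_mat_sum:
  fixes A y B :: "'a::comm_semiring_0 mat"
  assumes "A \<in> carrier_mat n n" "y \<in> carrier_mat n n" "B \<in> carrier_mat n n" "i < n" "j < n"
  shows "(A * y * B) $$ (i,j) = (\<Sum>a<n. \<Sum>b<n. A $$ (i,a) * y $$ (a,b) * B $$ (b,j))"
proof -
  have "(A * y * B) $$ (i,j) = (\<Sum>b<n. (A * y) $$ (i,b) * B $$ (b,j))"
    using assms by (intro index_mult_mat_sum) auto
  also have "\<dots> = (\<Sum>b<n. (\<Sum>a<n. A $$ (i,a) * y $$ (a,b)) * B $$ (b,j))"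
    using assms index_mult_mat_sum[of A n n y n i] by (intro sum.cong refl) auto
  also have "\<dots> = (\<Sum>b<n. \<Sum>a<n. A $$ (i,a) * y $$ (a,b) * B $$ (b,j))"
    by (simp add: sum_distrib_right)
  also have "\<dots> = (\<Sum>a<n. \<Sum>b<n. A $$ (i,a) * y $$ (a,b) * B $$ (b,j))"
    by (rule sum.swap)
  finally show ?thesis .
qed

lemma pow_mat_Suc_left:
  fixes A :: "'a::semiring_1 mat"
  assumes "A \<in> carrier_mat n n"
  shows "A ^\<^sub>m Suc k = A * A ^\<^sub>m k"
proof (induction k)
  case 0 then show ?case using assms by simp
next
  case (Suc k)
  have "A ^\<^sub>m Suc (Suc k) = (A * A ^\<^sub>m k) * A" using Suc by simp
  also have "\<dots> = A * (A ^\<^sub>m k * A)" using assms by (intro assoc_mult_mat) auto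
  finally show ?case by simp
qed

lemma pow_mat_add:
  fixes A :: "'a::semiring_1 mat"
  assumes "A \<in> carrier_mat n n"
  shows "A ^\<^sub>m (k + l) = A ^\<^sub>m k * A ^\<^sub>m l"
proof (induction l)
  case 0 then show ?case using assms by simp
next
  case (Suc l)
  have "A ^\<^sub>m (k + Suc l) = (A ^\<^sub>m k * A ^\<^sub>m l) * A" using Suc by simp
  also have "\<dots> = A ^\<^sub>m k * (A ^\<^sub>m l * A)" using assms by (intro assoc_mult_mat) auto
  finally show ?case by simp
qed

lemma transpose_pow_mat:
  fixes A :: "'a::comm_semiring_1 mat"
  assumes "A \<in> carrier_mat n n"
  shows "transpose_mat (A ^\<^sub>m k) = transpose_mat A ^\<^sub>m k"
proof (induction k)
  case 0 then show ?case using assms by simp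
next
  case (Suc k)
  have "transpose_mat (A ^\<^sub>m Suc k) = transpose_mat A * transpose_mat A ^\<^sub>m k"
    using assms Suc by (simp add: transpose_mult[of _ n n _ n])
  then show ?case using pow_mat_Suc_left[of "transpose_mat A" n k] assms by simp
qed

lemma mult_pow_mat_sandwich:
  fixes X y Z :: "'a::semiring_1 mat"
  assumes X: "X \<in> carrier_mat n n" and y: "y \<in> carrier_mat n n" and Z: "Z \<in> carrier_mat n n"
  shows "X * (X ^\<^sub>m m * y * Z ^\<^sub>m l) = X ^\<^sub>m Suc m * y * Z ^\<^sub>m l"
    and "X ^\<^sub>m m * y * Z ^\<^sub>m l * Z = X ^\<^sub>m m * y * Z ^\<^sub>m Suc l"
proof -
  have "X * (X ^\<^sub>m m * y * Z ^\<^sub>m l) = (X * (X ^\<^sub>m m * y)) * Z ^\<^sub>m l"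
    using X y Z by (intro assoc_mult_mat[symmetric]) auto
  also have "X * (X ^\<^sub>m m * y) = (X * X ^\<^sub>m m) * y"
    using X y by (intro assoc_mult_mat[symmetric]) auto
  also have "X * X ^\<^sub>m m = X ^\<^sub>m Suc m" by (rule pow_mat_Suc_left[OF X, symmetric])
  finally show "X * (X ^\<^sub>m m * y * Z ^\<^sub>m l) = X ^\<^sub>m Suc m * y * Z ^\<^sub>m l" .
  show "X ^\<^sub>m m * y * Z ^\<^sub>m l * Z = X ^\<^sub>m m * y * Z ^\<^sub>m Suc l"
    using assoc_mult_mat[of "X ^\<^sub>m m * y" n n "Z ^\<^sub>m l" n Z n] X y Z by fastforce
qed

lemma pow_mat_smult:
  fixes A :: "'a::comm_semiring_1 mat"
  assumes "A \<in> carrier_mat n n"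
  shows "(c \<cdot>\<^sub>m A) ^\<^sub>m k = c ^ k \<cdot>\<^sub>m A ^\<^sub>m k"
proof (induction k)
  case 0 then show ?case using assms by (auto intro!: eq_matI)
next
  case (Suc k)
  have "(c \<cdot>\<^sub>m A) ^\<^sub>m Suc k = c ^ k \<cdot>\<^sub>m (A ^\<^sub>m k * (c \<cdot>\<^sub>m A))"
    using Suc assms by (simp add: mult_smult_assoc_mat[of _ n n _ n])
  also have "\<dots> = c ^ Suc k \<cdot>\<^sub>m A ^\<^sub>m Suc k"
    using assms by (auto simp: mult_smult_distrib[of _ n n _ n] mult_ac intro!: eq_matI)
  finally show ?case .
qed

definition mat_abs_sum :: "real mat \<Rightarrow> real" where
  "mat_abs_sum A = (\<Sum>a<dim_row A. \<Sum>b<dim_col A. \<bar>A $$ (a,b)\<bar>)"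

lemma abs_pow_mat_entry_le:
  assumes A: "A \<in> carrier_mat n n" and "i < n" "j < n"
  shows "\<bar>(A ^\<^sub>m k) $$ (i,j)\<bar> \<le> mat_abs_sum A ^ k"
  using assms(2,3)
proof (induction k arbitrary: j)
  case 0 then show ?case using A by simp
next
  case (Suc k)
  have col: "(\<Sum>c<n. \<bar>A $$ (c,j)\<bar>) \<le> mat_abs_sum A"
    using A Suc.prems by (auto simp: mat_abs_sum_def intro!: order_trans[OF _ sum_mono[OF member_le_sum]])
  have "\<bar>(A ^\<^sub>m Suc k) $$ (i,j)\<bar> \<le> (\<Sum>c<n. \<bar>(A ^\<^sub>m k) $$ (i,c)\<bar> * \<bar>A $$ (c,j)\<bar>)"
    using A Suc.prems
    by (simp add: index_mult_mat_sum[of _ n n] abs_mult[symmetric] del: index_mult_mat)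
  also have "\<dots> \<le> (\<Sum>c<n. mat_abs_sum A ^ k * \<bar>A $$ (c,j)\<bar>)"
    by (intro sum_mono mult_right_mono Suc.IH) (use Suc in auto)
  also have "\<dots> = mat_abs_sum A ^ k * (\<Sum>c<n. \<bar>A $$ (c,j)\<bar>)"
    by (simp add: sum_distrib_left)
  also have "\<dots> \<le> mat_abs_sum A ^ k * mat_abs_sum A"
    by (rule mult_left_mono[OF col]) (simp add: mat_abs_sum_def sum_nonneg)
  finally show ?case by (simp add: mult.commute)
qed

lemma summable_mexp_entry:
  fixes A :: "real mat"
  assumes "A \<in> carrier_mat n n" "i < n" "j < n"
  shows "summable (\<lambda>k. norm ((A ^\<^sub>m k) $$ (i,j) / fact k))"
proof (rule summable_comparison_test[OF _ summable_exp[of "mat_abs_sum A"]])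
  have "\<bar>(A ^\<^sub>m k) $$ (i,j)\<bar> / fact k \<le> mat_abs_sum A ^ k / fact k" for k
    by (intro divide_right_mono abs_pow_mat_entry_le[OF assms]) auto
  then show "\<exists>N. \<forall>k\<ge>N. norm (norm ((A ^\<^sub>m k) $$ (i,j) / fact k)) \<le> inverse (fact k) * mat_abs_sum A ^ k"
    by (simp add: divide_inverse mult.commute abs_mult)
qed

lemma mexp_carrier [simp]: "A \<in> carrier_mat n n \<Longrightarrow> mexp A \<in> carrier_mat n n"
  unfolding mexp_def carrier_mat_def by simp

lemma mexp_entry_sums:
  assumes "A \<in> carrier_mat n n" "i < n" "j < n"
  shows "(\<lambda>k. (A ^\<^sub>m k) $$ (i,j) / fact k) sums (mexp A $$ (i,j))"
  using summable_norm_cancel[OF summable_mexp_entry[OF assms]] assms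
  by (simp add: summable_sums mexp_def)

lemma transpose_mexp:
  assumes A: "A \<in> carrier_mat n n"
  shows "transpose_mat (mexp A) = mexp (transpose_mat A)"
proof (rule eq_matI)
  fix i j assume "i < dim_row (mexp (transpose_mat A))" "j < dim_col (mexp (transpose_mat A))"
  then have ij: "i < n" "j < n" using A by (auto simp: mexp_def)
  have "transpose_mat (mexp A) $$ (i,j) = mexp A $$ (j,i)"
    using ij mexp_carrier[OF A] by simp
  then have "(\<lambda>k. (transpose_mat A ^\<^sub>m k) $$ (i,j) / fact k) sums (transpose_mat (mexp A) $$ (i,j))"
    using mexp_entry_sums[OF A ij(2,1)] ij A by (simp add: transpose_pow_mat[OF A, symmetric])
  then show "transpose_mat (mexp A) $$ (i,j) = mexp (transpose_mat A) $$ (i,j)"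
    using mexp_entry_sums[of "transpose_mat A" n i j] A ij by (simp add: sums_iff)
qed (use A in \<open>auto simp: mexp_def\<close>)

text \<open>The \<open>N\<close>-th term of the Cauchy product of two exponential series.\<close>

definition exp_conv :: "(nat \<Rightarrow> nat \<Rightarrow> real) \<Rightarrow> nat \<Rightarrow> real" where
  "exp_conv W N = (\<Sum>m\<le>N. W m (N - m) / (fact m * fact (N - m)))"

lemma exp_conv_Suc:
  "real (Suc N) * exp_conv W (Suc N) = exp_conv (\<lambda>m l. W (Suc m) l) N + exp_conv (\<lambda>m l. W m (Suc l)) N"
proof -
  define g where "g m = W m (Suc N - m) / (fact m * fact (Suc N - m))" for m
  have "real (Suc N) * exp_conv W (Suc N) = (\<Sum>m\<le>Suc N. real m * g m + real (Suc N - m) * g m)"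
    unfolding exp_conv_def sum_distrib_left g_def[symmetric]
    by (intro sum.cong refl) (simp add: of_nat_diff algebra_simps)
  also have "\<dots> = (\<Sum>m\<le>Suc N. real m * g m) + (\<Sum>m\<le>Suc N. real (Suc N - m) * g m)"
    by (rule sum.distrib)
  also have "(\<Sum>m\<le>Suc N. real m * g m) = (\<Sum>m\<le>N. real (Suc m) * g (Suc m))"
    by (subst sum.atMost_Suc_shift) simp
  also have "\<dots> = exp_conv (\<lambda>m l. W (Suc m) l) N"
    unfolding exp_conv_def g_def by (intro sum.cong refl) (simp add: field_simps del: of_nat_Suc)
  also have "(\<Sum>m\<le>Suc N. real (Suc N - m) * g m) = (\<Sum>m\<le>N. real (Suc N - m) * g m)"
    by (subst sum.atMost_Suc) simp
  also have "\<dots> = exp_conv (\<lambda>m l. W m (Suc l)) N"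
    unfolding exp_conv_def g_def by (intro sum.cong refl) (simp add: Suc_diff_le field_simps del: of_nat_Suc)
  finally show ?thesis .
qed

lemma exp_conv_sum_mult:
  "exp_conv (\<lambda>m l. \<Sum>c\<in>C. a c * W c m l) N = (\<Sum>c\<in>C. a c * exp_conv (W c) N)"
  unfolding exp_conv_def
  by (simp add: sum_distrib_left sum_divide_distrib sum.swap[of _ C] mult.assoc)

lemma mexp_mult_mult_mexp_sums:
  assumes A: "A \<in> carrier_mat n n" and y: "y \<in> carrier_mat n n" and B: "B \<in> carrier_mat n n"
    and ij: "i < n" "j < n"
  shows "exp_conv (\<lambda>m l. (A ^\<^sub>m m * y * B ^\<^sub>m l) $$ (i,j)) sums ((mexp A * y * mexp B) $$ (i,j))"
proof -
  define P where "P m a = (A ^\<^sub>m m) $$ (i,a) / fact m" for m a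
  define Q where "Q m b = (B ^\<^sub>m m) $$ (b,j) / fact m" for m b
  have "(\<lambda>N. \<Sum>m\<le>N. P m a * Q (N-m) b) sums (mexp A $$ (i,a) * mexp B $$ (b,j))"
    if "a < n" "b < n" for a b
    using Cauchy_product_sums[OF summable_mexp_entry[OF A ij(1) that(1)] summable_mexp_entry[OF B that(2) ij(2)]]
      mexp_entry_sums[OF A ij(1) that(1)] mexp_entry_sums[OF B that(2) ij(2)]
    unfolding P_def Q_def by (simp add: sums_iff)
  then have "(\<lambda>N. \<Sum>a<n. \<Sum>b<n. y $$ (a,b) * (\<Sum>m\<le>N. P m a * Q (N-m) b))
      sums (\<Sum>a<n. \<Sum>b<n. y $$ (a,b) * (mexp A $$ (i,a) * mexp B $$ (b,j)))"
    by (intro sums_sum sums_mult) auto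
  moreover have "(\<Sum>a<n. \<Sum>b<n. y $$ (a,b) * (mexp A $$ (i,a) * mexp B $$ (b,j)))
      = (mexp A * y * mexp B) $$ (i,j)"
    using A y B ij by (simp add: index_mult3_mat_sum[of _ n] mult_ac del: index_mult_mat)
  moreover have "(\<Sum>a<n. \<Sum>b<n. y $$ (a,b) * (\<Sum>m\<le>N. P m a * Q (N-m) b))
      = exp_conv (\<lambda>m l. (A ^\<^sub>m m * y * B ^\<^sub>m l) $$ (i,j)) N" for N
  proof -
    have "(\<Sum>a<n. \<Sum>b<n. y $$ (a,b) * (\<Sum>m\<le>N. P m a * Q (N-m) b))
       = (\<Sum>a<n. \<Sum>m\<le>N. \<Sum>b<n. y $$ (a,b) * (P m a * Q (N-m) b))"
      by (simp add: sum_distrib_left sum.swap[of _ "{..<n}" "{..N}"])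
    also have "\<dots> = (\<Sum>m\<le>N. \<Sum>a<n. \<Sum>b<n. y $$ (a,b) * (P m a * Q (N-m) b))"
      by (rule sum.swap)
    also have "\<dots> = exp_conv (\<lambda>m l. (A ^\<^sub>m m * y * B ^\<^sub>m l) $$ (i,j)) N"
      unfolding exp_conv_def using A y B ij
      by (intro sum.cong refl)
        (simp add: index_mult3_mat_sum[of _ n] P_def Q_def sum_divide_distrib mult_ac del: index_mult_mat)
    finally show ?thesis .
  qed
  ultimately show ?thesis by simp
qed

lemma mexp_neg_mult_mexp:
  fixes X :: "real mat"
  assumes X: "X \<in> carrier_mat n n"
  shows "mexp ((-1) \<cdot>\<^sub>m X) * mexp X = 1\<^sub>m n"
proof (rule eq_matI)
  fix i j assume "i < dim_row (1\<^sub>m n)" "j < dim_col (1\<^sub>m n)"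
  then have ij: "i < n" "j < n" by auto
  have terms: "exp_conv (\<lambda>m l. (((-1) \<cdot>\<^sub>m X) ^\<^sub>m m * 1\<^sub>m n * X ^\<^sub>m l) $$ (i,j)) N
      = (if N = 0 then 1\<^sub>m n $$ (i,j) else 0)" for N
  proof -
    have "(((-1) \<cdot>\<^sub>m X) ^\<^sub>m m * 1\<^sub>m n * X ^\<^sub>m (N - m)) $$ (i,j) / (fact m * fact (N - m))
        = (X ^\<^sub>m N) $$ (i,j) / fact N * (of_nat (N choose m) * (-1) ^ m * 1 ^ (N - m))"
      if "m \<le> N" for m
    proof -
      have "((-1) \<cdot>\<^sub>m X) ^\<^sub>m m * 1\<^sub>m n * X ^\<^sub>m (N - m) = (-1) ^ m \<cdot>\<^sub>m (X ^\<^sub>m m * X ^\<^sub>m (N - m))"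
        using X by (simp add: pow_mat_smult[OF X] mult_smult_assoc_mat[of _ n n _ n])
      also have "X ^\<^sub>m m * X ^\<^sub>m (N - m) = X ^\<^sub>m N"
        using pow_mat_add[OF X, of m "N - m"] that by simp
      finally show ?thesis
        using that X ij binomial_fact[OF that, where 'a = real] by (simp add: field_simps)
    qed
    then have "exp_conv (\<lambda>m l. (((-1) \<cdot>\<^sub>m X) ^\<^sub>m m * 1\<^sub>m n * X ^\<^sub>m l) $$ (i,j)) N
        = (X ^\<^sub>m N) $$ (i,j) / fact N * (-1 + 1) ^ N"
      unfolding exp_conv_def binomial_ring by (simp add: sum_distrib_left)
    then show ?thesis using X ij by simp
  qed
  have "(\<lambda>N. if N = 0 then 1\<^sub>m n $$ (i,j) else 0) sums ((mexp ((-1) \<cdot>\<^sub>m X) * 1\<^sub>m n * mexp X) $$ (i,j))"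
    using mexp_mult_mult_mexp_sums[of "(-1) \<cdot>\<^sub>m X" n "1\<^sub>m n" X i j] X ij unfolding terms by simp
  then show "(mexp ((-1) \<cdot>\<^sub>m X) * mexp X) $$ (i,j) = 1\<^sub>m n $$ (i,j)"
    using sums_single[of 0 "\<lambda>_. (1\<^sub>m n :: real mat) $$ (i,j)"] X
    by (simp add: right_mult_one_mat[of _ n n] sums_iff)
qed (use X in \<open>auto simp: mexp_def\<close>)

section \<open>The action of exponentials on sub-Hankel matrices\<close>

definition rho_der :: "real mat \<Rightarrow> real mat \<Rightarrow> real mat" where
  "rho_der X y = X * y + y * transpose_mat X"

lemma rho_der_pow_carrier:
  "X \<in> carrier_mat n n \<Longrightarrow> y \<in> carrier_mat n n \<Longrightarrow> (rho_der X ^^ N) y \<in> carrier_mat n n"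
  by (induction N) (auto simp: rho_der_def)

lemma rho_der_pow_entry:
  assumes X: "X \<in> carrier_mat n n" and y: "y \<in> carrier_mat n n" and "i < n" "j < n"
  shows "((rho_der X ^^ N) y) $$ (i,j)
       = fact N * exp_conv (\<lambda>m l. (X ^\<^sub>m m * y * transpose_mat X ^\<^sub>m l) $$ (i,j)) N"
  using assms(3,4)
proof (induction N arbitrary: i j)
  case 0
  then show ?case using X y by (simp add: exp_conv_def)
next
  case (Suc N)
  let ?Xt = "transpose_mat X"
  define W where "W i j m l = (X ^\<^sub>m m * y * ?Xt ^\<^sub>m l) $$ (i,j)" for i j m l
  have Xt: "?Xt \<in> carrier_mat n n" using X by simp
  have W_left: "(\<Sum>c<n. X $$ (i,c) * W c j m l) = W i j (Suc m) l" for m l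
    unfolding W_def mult_pow_mat_sandwich(1)[OF X y Xt, symmetric]
    by (rule index_mult_mat_sum[symmetric]) (use X y Suc.prems in auto)
  have W_right: "(\<Sum>c<n. ?Xt $$ (c,j) * W i c m l) = W i j m (Suc l)" for m l
    unfolding W_def mult_pow_mat_sandwich(2)[OF X y Xt, symmetric] mult.commute[of "?Xt $$ _"]
    by (rule index_mult_mat_sum[symmetric]) (use X y Suc.prems in auto)
  define Y where "Y = (rho_der X ^^ N) y"
  have Y: "Y \<in> carrier_mat n n" unfolding Y_def using rho_der_pow_carrier[OF X y] .
  have "((rho_der X ^^ Suc N) y) $$ (i,j) = (X * Y) $$ (i,j) + (Y * ?Xt) $$ (i,j)"
    using X Y Suc.prems by (simp add: Y_def rho_der_def)
  also have "\<dots> = (\<Sum>c<n. X $$ (i,c) * Y $$ (c,j)) + (\<Sum>c<n. ?Xt $$ (c,j) * Y $$ (i,c))"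
    using X Y Suc.prems by (simp add: index_mult_mat_sum[of _ n n] mult.commute del: index_mult_mat)
  also have "\<dots> = fact N * ((\<Sum>c<n. X $$ (i,c) * exp_conv (W c j) N)
                         + (\<Sum>c<n. ?Xt $$ (c,j) * exp_conv (W i c) N))"
    using Suc.IH Suc.prems
    by (simp add: Y_def W_def[symmetric] sum_distrib_left distrib_left mult.left_commute)
  also have "\<dots> = fact N * (exp_conv (\<lambda>m l. W i j (Suc m) l) N + exp_conv (\<lambda>m l. W i j m (Suc l)) N)"
    by (simp only: exp_conv_sum_mult[symmetric] W_left W_right)
  also have "\<dots> = fact (Suc N) * exp_conv (W i j) (Suc N)"
    by (simp add: exp_conv_Suc[symmetric] del: of_nat_Suc)
  finally show ?case by (simp add: W_def[abs_def])
qed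

lemma rho_mexp_sums:
  assumes X: "X \<in> carrier_mat n n" and y: "y \<in> carrier_mat n n" and ij: "i < n" "j < n"
  shows "(\<lambda>N. ((rho_der X ^^ N) y) $$ (i,j) / fact N) sums (rho (mexp X) y $$ (i,j))"
  using mexp_mult_mult_mexp_sums[OF X y _ ij, of "transpose_mat X"] X y ij
  by (simp add: rho_def transpose_mexp rho_der_pow_entry)

lemma Tm_entry:
  "i < r \<Longrightarrow> j < r \<Longrightarrow> Tm r k $$ (i,j) = (if j = i + k then real r - real k - real i else 0)"
  unfolding Tm_def by simp

definition Tsum :: "nat \<Rightarrow> (nat \<Rightarrow> real) \<Rightarrow> real \<Rightarrow> real mat" where
  "Tsum r \<gamma> \<mu> = mat r r (\<lambda>(i,j). (\<Sum>k<r. \<gamma> k * Tm r k $$ (i,j)) + (if i = j then \<mu> else 0))"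

lemma Tsum_carrier [simp]: "Tsum r \<gamma> \<mu> \<in> carrier_mat r r"
  and dim_Tsum [simp]: "dim_row (Tsum r \<gamma> \<mu>) = r" "dim_col (Tsum r \<gamma> \<mu>) = r"
  unfolding Tsum_def by simp_all

lemma gLie_element_eq_Tsum:
  assumes "r \<ge> 1"
  shows "mat r r (\<lambda>(i,j). a * H1 r $$ (i,j) + b * H2 r $$ (i,j) + (\<Sum>k\<in>{1..<r}. c k * Tm r k $$ (i,j)))
       = Tsum r (\<lambda>k. if k = 0 then (a - b) / real r else c k) (b - a / 2)"
proof (rule eq_matI)
  fix i j assume "i < dim_row (Tsum r (\<lambda>k. if k = 0 then (a - b) / real r else c k) (b - a / 2))"
    "j < dim_col (Tsum r (\<lambda>k. if k = 0 then (a - b) / real r else c k) (b - a / 2))"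
  then have ij: "i < r" "j < r" by (auto simp: Tsum_def)
  have "{..<r} = insert 0 {1..<r}" using assms by auto
  then have "(\<Sum>k<r. (if k = 0 then (a - b) / real r else c k) * Tm r k $$ (i,j))
      = (a - b) / real r * Tm r 0 $$ (i,j) + (\<Sum>k\<in>{1..<r}. c k * Tm r k $$ (i,j))"
    by simp
  moreover have "a * H1 r $$ (i,j) + b * H2 r $$ (i,j)
      = (a - b) / real r * Tm r 0 $$ (i,j) + (if i = j then b - a / 2 else 0)"
    using ij by (simp add: H1_def H2_def algebra_simps diff_divide_distrib)
  ultimately show "mat r r (\<lambda>(i,j). a * H1 r $$ (i,j) + b * H2 r $$ (i,j) + (\<Sum>k\<in>{1..<r}. c k * Tm r k $$ (i,j))) $$ (i,j)
      = Tsum r (\<lambda>k. if k = 0 then (a - b) / real r else c k) (b - a / 2) $$ (i,j)"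
    using ij by (simp add: Tsum_def)
qed (auto simp: Tsum_def)

lemma gLie_eq_Tsum:
  assumes "r \<ge> 1"
  shows "gLie r = {Tsum r \<gamma> \<mu> | \<gamma> \<mu>. True}"
proof (intro equalityI subsetI)
  fix X assume "X \<in> gLie r"
  then show "X \<in> {Tsum r \<gamma> \<mu> | \<gamma> \<mu>. True}"
    unfolding gLie_def using gLie_element_eq_Tsum[OF assms] by auto
next
  fix X assume "X \<in> {Tsum r \<gamma> \<mu> | \<gamma> \<mu>. True}"
  then obtain \<gamma> \<mu> where X: "X = Tsum r \<gamma> \<mu>" by blast
  define a where "a = 2 * (real r * \<gamma> 0 + \<mu>)"
  define b where "b = real r * \<gamma> 0 + 2 * \<mu>"
  have "(\<lambda>k. if k = 0 then (a - b) / real r else \<gamma> k) = \<gamma>" "b - a / 2 = \<mu>"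
    using assms by (auto simp: a_def b_def field_simps)
  then have "X = mat r r (\<lambda>(i,j). a * H1 r $$ (i,j) + b * H2 r $$ (i,j) + (\<Sum>k\<in>{1..<r}. \<gamma> k * Tm r k $$ (i,j)))"
    using gLie_element_eq_Tsum[OF assms, of a b \<gamma>] X by simp
  then show "X \<in> gLie r" unfolding gLie_def by blast
qed

lemma Tsum_in_gLie: "r \<ge> 1 \<Longrightarrow> Tsum r \<gamma> \<mu> \<in> gLie r"
  using gLie_eq_Tsum by blast

lemma sh_entry: "i < r \<Longrightarrow> j < r \<Longrightarrow> sh r d $$ (i,j) = (if i + j \<le> r then d (i + j + 1) else 0)"
  unfolding sh_def by simp

lemma sh_carrier [simp]: "sh r d \<in> carrier_mat r r"
  and dim_sh [simp]: "dim_row (sh r d) = r" "dim_col (sh r d) = r"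
  unfolding sh_def by simp_all

lemma sh_cong: "(\<And>s. 1 \<le> s \<Longrightarrow> s \<le> r + 1 \<Longrightarrow> d s = e s) \<Longrightarrow> sh r d = sh r e"
  unfolding sh_def by (rule eq_matI) auto

lemma Tsum_mult_entry:
  assumes z: "z \<in> carrier_mat r r" and ij: "i < r" "j < r"
  shows "(Tsum r \<gamma> \<mu> * z) $$ (i,j)
       = (\<Sum>k<r. \<gamma> k * (if i + k < r then (real r - real k - real i) * z $$ (i + k, j) else 0)) + \<mu> * z $$ (i,j)"
proof -
  have "(Tsum r \<gamma> \<mu> * z) $$ (i,j) = (\<Sum>c<r. Tsum r \<gamma> \<mu> $$ (i,c) * z $$ (c,j))"
    using z ij by (intro index_mult_mat_sum) auto
  also have "\<dots> = (\<Sum>c<r. (\<Sum>k<r. \<gamma> k * (Tm r k $$ (i,c) * z $$ (c,j))) + (if c = i then \<mu> * z $$ (c,j) else 0))"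
    using ij by (intro sum.cong refl) (auto simp: Tsum_def sum_distrib_right distrib_right mult.assoc)
  also have "\<dots> = (\<Sum>c<r. \<Sum>k<r. \<gamma> k * (Tm r k $$ (i,c) * z $$ (c,j))) + \<mu> * z $$ (i,j)"
    using ij by (simp add: sum.distrib)
  also have "(\<Sum>c<r. \<Sum>k<r. \<gamma> k * (Tm r k $$ (i,c) * z $$ (c,j)))
      = (\<Sum>k<r. \<gamma> k * (\<Sum>c<r. Tm r k $$ (i,c) * z $$ (c,j)))"
    by (subst sum.swap) (simp add: sum_distrib_left)
  finally show ?thesis
    using ij by (simp add: Tm_entry if_distrib[of "\<lambda>x. x * _"] sum.delta' cong: if_cong)
qed

lemma mult_transpose_Tsum_entry:
  assumes z: "z \<in> carrier_mat r r" and ij: "i < r" "j < r"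
  shows "(z * transpose_mat (Tsum r \<gamma> \<mu>)) $$ (i,j)
       = (\<Sum>k<r. \<gamma> k * (if j + k < r then (real r - real k - real j) * z $$ (i, j + k) else 0)) + \<mu> * z $$ (i,j)"
proof -
  have "z * transpose_mat (Tsum r \<gamma> \<mu>) = transpose_mat (Tsum r \<gamma> \<mu> * transpose_mat z)"
    using z by (simp add: transpose_mult[of _ r r _ r])
  then have "(z * transpose_mat (Tsum r \<gamma> \<mu>)) $$ (i,j) = (Tsum r \<gamma> \<mu> * transpose_mat z) $$ (j,i)"
    using z ij by (simp add: carrier_matD[OF z])
  then show ?thesis
    using Tsum_mult_entry[of "transpose_mat z" r j i \<gamma> \<mu>] z ij by (simp cong: if_cong)
qed

text \<open>
  With \<open>s = i + j + 1\<close>, the \<open>(i,j)\<close> entry of \<open>T\<^sub>k y + y T\<^sub>k\<^sup>T\<close> is \<open>(r-k-i) y\<^bsub>s+k\<^esub> + (r-k-j) y\<^bsub>s+k\<^esub>\<close>,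
  whence the coefficient \<open>2r - 2k - s + 1\<close>.
\<close>

definition sh_rho_der :: "nat \<Rightarrow> (nat \<Rightarrow> real) \<Rightarrow> real \<Rightarrow> (nat \<Rightarrow> real) \<Rightarrow> nat \<Rightarrow> real" where
  "sh_rho_der r \<gamma> \<mu> d s = (\<Sum>k<r. \<gamma> k * (if s + k \<le> r + 1 then (2 * real r - 2 * real k - real s + 1) * d (s + k) else 0))
     + 2 * \<mu> * d s"

lemma sh_shift_pair:
  assumes ij: "i < r" "j < r"
  shows "(if i + k < r then (real r - real k - real i) * sh r d $$ (i + k, j) else 0)
       + (if j + k < r then (real r - real k - real j) * sh r d $$ (i, j + k) else 0)
       = (if i + j \<le> r \<and> i + j + k \<le> r then (2 * real r - 2 * real k - real (i + j + 1) + 1) * d (i + j + 1 + k) else 0)"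
proof (cases "i + j + k \<le> r")
  case True
  have "(if i + k < r then (real r - real k - real i) * sh r d $$ (i + k, j) else 0)
      = (real r - real k - real i) * d (i + j + 1 + k)"
    using True ij by (cases "i + k < r") (auto simp: sh_entry ac_simps)
  moreover have "(if j + k < r then (real r - real k - real j) * sh r d $$ (i, j + k) else 0)
      = (real r - real k - real j) * d (i + j + 1 + k)"
    using True ij by (cases "j + k < r") (auto simp: sh_entry ac_simps)
  ultimately show ?thesis using True by (simp add: algebra_simps)
qed (use ij in \<open>auto simp: sh_entry\<close>)

lemma rho_der_Tsum_sh: "rho_der (Tsum r \<gamma> \<mu>) (sh r d) = sh r (sh_rho_der r \<gamma> \<mu> d)"
proof (rule eq_matI)
  fix i j assume "i < dim_row (sh r (sh_rho_der r \<gamma> \<mu> d))" "j < dim_col (sh r (sh_rho_der r \<gamma> \<mu> d))"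
  then have ij: "i < r" "j < r" by (auto simp: sh_def)
  have "rho_der (Tsum r \<gamma> \<mu>) (sh r d) $$ (i,j)
      = (\<Sum>k<r. \<gamma> k * ((if i + k < r then (real r - real k - real i) * sh r d $$ (i + k, j) else 0)
                      + (if j + k < r then (real r - real k - real j) * sh r d $$ (i, j + k) else 0)))
        + 2 * \<mu> * sh r d $$ (i,j)"
    using ij by (simp add: rho_der_def Tsum_mult_entry mult_transpose_Tsum_entry
        distrib_left sum.distrib algebra_simps del: index_mult_mat(1))
  also have "\<dots> = sh r (sh_rho_der r \<gamma> \<mu> d) $$ (i,j)"
    using ij by (auto simp: sh_shift_pair sh_entry sh_rho_der_def intro!: sum.cong)
  finally show "rho_der (Tsum r \<gamma> \<mu>) (sh r d) $$ (i,j) = sh r (sh_rho_der r \<gamma> \<mu> d) $$ (i,j)" .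
qed (auto simp: rho_der_def sh_def)

lemma rho_carrier [simp]: "g \<in> carrier_mat n n \<Longrightarrow> y \<in> carrier_mat n n \<Longrightarrow> rho g y \<in> carrier_mat n n"
  unfolding rho_def by auto

lemma rho_mexp_Tsum_sh:
  "rho (mexp (Tsum r \<gamma> \<mu>)) (sh r d) = sh r (\<lambda>s. \<Sum>N. (sh_rho_der r \<gamma> \<mu> ^^ N) d s / fact N)"
proof (rule eq_matI)
  fix i j assume "i < dim_row (sh r (\<lambda>s. \<Sum>N. (sh_rho_der r \<gamma> \<mu> ^^ N) d s / fact N))"
    "j < dim_col (sh r (\<lambda>s. \<Sum>N. (sh_rho_der r \<gamma> \<mu> ^^ N) d s / fact N))"
  then have ij: "i < r" "j < r" by simp_all
  have "(rho_der (Tsum r \<gamma> \<mu>) ^^ N) (sh r d) = sh r ((sh_rho_der r \<gamma> \<mu> ^^ N) d)" for N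
    by (induction N) (simp_all add: rho_der_Tsum_sh)
  then have "(\<lambda>N. sh r ((sh_rho_der r \<gamma> \<mu> ^^ N) d) $$ (i,j) / fact N) sums (rho (mexp (Tsum r \<gamma> \<mu>)) (sh r d) $$ (i,j))"
    using rho_mexp_sums[OF Tsum_carrier sh_carrier ij, of \<gamma> \<mu> d] by simp
  then have "rho (mexp (Tsum r \<gamma> \<mu>)) (sh r d) $$ (i,j) = (\<Sum>N. sh r ((sh_rho_der r \<gamma> \<mu> ^^ N) d) $$ (i,j) / fact N)"
    by (simp add: sums_iff)
  then show "rho (mexp (Tsum r \<gamma> \<mu>)) (sh r d) $$ (i,j) = sh r (\<lambda>s. \<Sum>N. (sh_rho_der r \<gamma> \<mu> ^^ N) d s / fact N) $$ (i,j)"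
    using ij by (cases "i + j \<le> r") (simp_all add: sh_entry)
qed (simp_all add: carrier_matD[OF rho_carrier[OF mexp_carrier[OF Tsum_carrier] sh_carrier]])

lemma suminf_funpow_eigen:
  fixes F :: "('a \<Rightarrow> real) \<Rightarrow> 'a \<Rightarrow> real"
  assumes "\<And>d. F d s = c * d s"
  shows "(\<Sum>N. (F ^^ N) d s / fact N) = exp c * d s"
proof -
  have "(F ^^ N) d s = c ^ N * d s" for N by (induction N) (simp_all add: assms mult.assoc)
  moreover have "(\<lambda>N. c ^ N / fact N) sums exp c"
    using exp_converges[of c] by (simp add: divide_inverse_commute)
  then have "(\<lambda>N. c ^ N / fact N * d s) sums (exp c * d s)"
    by (rule sums_mult2)
  ultimately show ?thesis by (simp add: sums_iff mult_ac)
qed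

lemma sh_rho_der_top:
  assumes "r \<ge> 1"
  shows "sh_rho_der r \<gamma> \<mu> d (r + 1) = (real r * \<gamma> 0 + 2 * \<mu>) * d (r + 1)"
proof -
  have "(\<Sum>k<r. \<gamma> k * (if r + 1 + k \<le> r + 1 then (2 * real r - 2 * real k - real (r + 1) + 1) * d (r + 1 + k) else 0))
      = (\<Sum>k<r. if k = 0 then \<gamma> 0 * real r * d (r + 1) else 0)"
    by (intro sum.cong refl) auto
  also have "\<dots> = \<gamma> 0 * real r * d (r + 1)" using assms by simp
  finally show ?thesis unfolding sh_rho_der_def by (simp add: algebra_simps)
qed

lemma sh_rho_der_diagonal:
  assumes "r \<ge> 1" "s \<le> r + 1"
  shows "sh_rho_der r (\<lambda>k. if k = 0 then c else 0) \<mu> d s = (c * (2 * real r - real s + 1) + 2 * \<mu>) * d s"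
proof -
  have "(\<Sum>k<r. (if k = 0 then c else 0) * (if s + k \<le> r + 1 then (2 * real r - 2 * real k - real s + 1) * d (s + k) else 0))
      = (\<Sum>k<r. if k = 0 then c * ((2 * real r - real s + 1) * d s) else 0)"
    using assms by (intro sum.cong refl) auto
  then show ?thesis using assms by (simp add: sh_rho_der_def algebra_simps)
qed

lemma sh_rho_der_unipotent:
  assumes "k < r"
  shows "sh_rho_der r (\<lambda>k'. if k' = k then t else 0) 0 d s
       = (if s + k \<le> r + 1 then t * (2 * real r - 2 * real k - real s + 1) * d (s + k) else 0)"
proof -
  have "(\<Sum>k'<r. (if k' = k then t else 0) * (if s + k' \<le> r + 1 then (2 * real r - 2 * real k' - real s + 1) * d (s + k') else 0))
      = (\<Sum>k'<r. if k' = k then t * (if s + k \<le> r + 1 then (2 * real r - 2 * real k - real s + 1) * d (s + k) else 0) else 0)"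
    by (intro sum.cong refl) auto
  then show ?thesis using assms by (simp add: sh_rho_der_def)
qed

lemma rho_mexp_Tsum_top:
  assumes "r \<ge> 1"
  shows "\<exists>e. rho (mexp (Tsum r \<gamma> \<mu>)) (sh r d) = sh r e \<and> e (r + 1) = exp (real r * \<gamma> 0 + 2 * \<mu>) * d (r + 1)"
  using rho_mexp_Tsum_sh[of r \<gamma> \<mu> d]
    suminf_funpow_eigen[where F = "sh_rho_der r \<gamma> \<mu>" and s = "r + 1", OF sh_rho_der_top[OF assms]] by blast

lemma rho_mexp_diagonal_sh:
  assumes "r \<ge> 1"
  shows "rho (mexp (Tsum r (\<lambda>k. if k = 0 then c else 0) \<mu>)) (sh r d)
       = sh r (\<lambda>s. exp (c * (2 * real r - real s + 1) + 2 * \<mu>) * d s)"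
  unfolding rho_mexp_Tsum_sh
  by (intro sh_cong suminf_funpow_eigen sh_rho_der_diagonal) (use assms in auto)

lemma rho_mexp_unipotent_sh:
  assumes k: "1 \<le> k" "k < r"
  shows "\<exists>e. rho (mexp (Tsum r (\<lambda>k'. if k' = k then t else 0) 0)) (sh r d) = sh r e
           \<and> (\<forall>s. r + 1 < s + k \<longrightarrow> e s = d s)
           \<and> e (r + 1 - k) = d (r + 1 - k) + t * (real r - real k) * d (r + 1)"
proof -
  define F where "F = sh_rho_der r (\<lambda>k'. if k' = k then t else 0) 0"
  have vanish: "F d' s = 0" if "r + 1 < s + k" for d' s
    using that k by (simp add: F_def sh_rho_der_unipotent)
  have high: "(\<Sum>N. (F ^^ N) d s / fact N) = d s" if "r + 1 < s + k" for s
  proof -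
    have "(F ^^ N) d s / fact N = (if N = 0 then d s else 0)" for N
      using vanish[OF that] by (cases N) simp_all
    then show ?thesis using sums_single[of 0 "\<lambda>_. d s"] by (simp add: sums_iff)
  qed
  define s0 where "s0 = r + 1 - k"
  have s0: "s0 + k = r + 1" "2 * real r - 2 * real k - real s0 + 1 = real r - real k"
    using k by (auto simp: s0_def of_nat_diff)
  have F_s0: "F d' s0 = t * (real r - real k) * d' (r + 1)" for d'
    unfolding F_def sh_rho_der_unipotent[OF k(2)] s0 by simp
  have "(F ^^ N) d s0 / fact N = 0" if "N \<notin> {0, 1}" for N
  proof -
    from that have "N = Suc (Suc (N - 2))" by auto
    moreover have "(F ^^ Suc (Suc M)) d s0 = 0" for M
      using vanish[of "r + 1"] k by (simp add: F_s0)
    ultimately show ?thesis by (metis div_0)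
  qed
  then have "(\<lambda>N. (F ^^ N) d s0 / fact N) sums (\<Sum>N\<in>{0, 1}. (F ^^ N) d s0 / fact N)"
    by (intro sums_finite) auto
  then have corner: "(\<Sum>N. (F ^^ N) d s0 / fact N) = d s0 + t * (real r - real k) * d (r + 1)"
    by (simp add: sums_iff F_s0)
  show ?thesis using rho_mexp_Tsum_sh high corner unfolding F_def s0_def by blast
qed

section \<open>The group G and its invariants\<close>

lemma gLie_carrier: "X \<in> gLie r \<Longrightarrow> X \<in> carrier_mat r r"
  unfolding gLie_def by auto

lemma uminus_gLie: "X \<in> gLie r \<Longrightarrow> (-1) \<cdot>\<^sub>m X \<in> gLie r"
proof -
  assume "X \<in> gLie r"
  then obtain a b c where "X = mat r r (\<lambda>(i,j). a * H1 r $$ (i,j) + b * H2 r $$ (i,j)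
                     + (\<Sum>k\<in>{1..<r}. c k * Tm r k $$ (i,j)))"
    unfolding gLie_def by blast
  then have "(-1) \<cdot>\<^sub>m X = mat r r (\<lambda>(i,j). (-a) * H1 r $$ (i,j) + (-b) * H2 r $$ (i,j)
                     + (\<Sum>k\<in>{1..<r}. (- c k) * Tm r k $$ (i,j)))"
    by (auto simp: sum_negf[symmetric] algebra_simps intro!: eq_matI)
  then show ?thesis
    unfolding gLie_def by (intro CollectI exI[of _ "-a"] exI[of _ "-b"] exI[of _ "\<lambda>k. - c k"]) simp
qed

lemma Ggrp_carrier: "g \<in> Ggrp r \<Longrightarrow> g \<in> carrier_mat r r"
proof (induction rule: Ggrp.induct)
  case (step X A)
  show ?case by (rule mult_carrier_mat[OF mexp_carrier[OF gLie_carrier[OF step.hyps(1)]] step.IH])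
qed simp

lemma mexp_in_Ggrp: "X \<in> gLie r \<Longrightarrow> mexp X \<in> Ggrp r"
  using Ggrp.step[OF _ Ggrp.one, of X r] right_mult_one_mat[OF mexp_carrier[OF gLie_carrier]] by simp

lemma Ggrp_mult_closed: "g \<in> Ggrp r \<Longrightarrow> h \<in> Ggrp r \<Longrightarrow> g * h \<in> Ggrp r"
proof (induction rule: Ggrp.induct)
  case one then show ?case using Ggrp_carrier[of h r] by simp
next
  case (step X A)
  have "mexp X \<in> carrier_mat r r" "A \<in> carrier_mat r r" "h \<in> carrier_mat r r"
    using step Ggrp_carrier gLie_carrier by auto
  then have "mexp X * A * h = mexp X * (A * h)" by (rule assoc_mult_mat)
  then show ?case using step Ggrp.step by simp
qed

lemma Ggrp_left_inverse: "g \<in> Ggrp r \<Longrightarrow> \<exists>h\<in>Ggrp r. h * g = 1\<^sub>m r"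
proof (induction rule: Ggrp.induct)
  case one then show ?case using Ggrp.one by force
next
  case (step X A)
  then obtain h where h: "h \<in> Ggrp r" "h * A = 1\<^sub>m r" by blast
  have X: "X \<in> carrier_mat r r" using step gLie_carrier by blast
  let ?M = "mexp ((-1) \<cdot>\<^sub>m X)"
  have c: "h \<in> carrier_mat r r" "A \<in> carrier_mat r r" "?M \<in> carrier_mat r r" "mexp X \<in> carrier_mat r r"
    using step h Ggrp_carrier X by auto
  have "(h * ?M) * (mexp X * A) = h * (?M * (mexp X * A))"
    using c by (intro assoc_mult_mat) auto
  also have "\<dots> = h * ((?M * mexp X) * A)"
    using assoc_mult_mat[of ?M r r "mexp X" r A r] c by simp
  also have "\<dots> = h * A" using c by (simp add: mexp_neg_mult_mexp[OF X])
  also have "\<dots> = 1\<^sub>m r" by (rule h(2))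
  finally show ?case
    using Ggrp_mult_closed[OF h(1) mexp_in_Ggrp[OF uminus_gLie[OF step(1)]]] by blast
qed

lemma det_Ggrp_nonzero: "g \<in> Ggrp r \<Longrightarrow> det g \<noteq> 0"
proof -
  assume g: "g \<in> Ggrp r"
  then obtain h where h: "h \<in> Ggrp r" "h * g = 1\<^sub>m r" using Ggrp_left_inverse by blast
  have "det h * det g = 1"
    using det_mult[of h r g] h g Ggrp_carrier by (metis det_one)
  then show ?thesis by auto
qed

lemma rho_mult:
  assumes "A \<in> carrier_mat n n" "B \<in> carrier_mat n n" "y \<in> carrier_mat n n"
  shows "rho (A * B) y = rho A (rho B y)"
proof -
  have "rho (A * B) y = A * B * y * (transpose_mat B * transpose_mat A)"
    unfolding rho_def using assms by (simp add: transpose_mult[of _ n n _ n])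
  also have "\<dots> = A * (B * y * transpose_mat B) * transpose_mat A"
    using assms by (simp add: assoc_mult_mat[of _ n n _ n _ n])
  finally show ?thesis unfolding rho_def .
qed

lemma rho_one: "y \<in> carrier_mat n n \<Longrightarrow> rho (1\<^sub>m n) y = y"
  unfolding rho_def by simp

lemma det_rho:
  assumes "g \<in> carrier_mat n n" "y \<in> carrier_mat n n"
  shows "det (rho g y) = det g ^ 2 * det y"
  unfolding rho_def using assms by (simp add: det_mult[of _ n] det_transpose power2_eq_square)

lemma Ggrp_action_sh:
  assumes "r \<ge> 1" "g \<in> Ggrp r"
  shows "\<exists>e \<kappa>. \<kappa> > 0 \<and> rho g (sh r d) = sh r e \<and> e (r + 1) = \<kappa> * d (r + 1)"
  using assms(2)
proof (induction arbitrary: d rule: Ggrp.induct)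
  case one
  show ?case by (intro exI[of _ d] exI[of _ 1]) (simp add: rho_one)
next
  case (step X A)
  obtain e \<kappa> where e: "\<kappa> > 0" "rho A (sh r d) = sh r e" "e (r + 1) = \<kappa> * d (r + 1)"
    using step.IH by blast
  obtain \<gamma> \<mu> where "X = Tsum r \<gamma> \<mu>" using step.hyps(1) gLie_eq_Tsum[OF assms(1)] by blast
  then obtain e' where e': "rho (mexp X) (sh r e) = sh r e'"
      "e' (r + 1) = exp (real r * \<gamma> 0 + 2 * \<mu>) * e (r + 1)"
    using rho_mexp_Tsum_top[OF assms(1)] by blast
  have "rho (mexp X * A) (sh r d) = rho (mexp X) (rho A (sh r d))"
    using step.hyps Ggrp_carrier gLie_carrier by (intro rho_mult) auto
  then have "rho (mexp X * A) (sh r d) = sh r e'" using e(2) e'(1) by simp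
  then show ?case
    using e e' by (intro exI[of _ e'] exI[of _ "exp (real r * \<gamma> 0 + 2 * \<mu>) * \<kappa>"]) auto
qed

lemma P2_sh: "r \<ge> 2 \<Longrightarrow> P2 r (sh r d) = d (r + 1)"
  unfolding P2_def by (simp add: sh_entry)

lemma Ggrp_preserves_SH:
  assumes "r \<ge> 1" "g \<in> Ggrp r" "y \<in> SH r"
  shows "rho g y \<in> SH r"
proof -
  obtain d where "y = sh r d" using assms(3) unfolding SH_def by blast
  moreover obtain e where "rho g (sh r d) = sh r e" using Ggrp_action_sh[OF assms(1,2)] by blast
  ultimately show ?thesis unfolding SH_def by blast
qed

lemma SH_carrier: "y \<in> SH r \<Longrightarrow> y \<in> carrier_mat r r"
  unfolding SH_def by auto

lemma P2_rho_Ggrp: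
  assumes "r \<ge> 2" "g \<in> Ggrp r" "y \<in> SH r"
  shows "\<exists>\<kappa>>0. P2 r (rho g y) = \<kappa> * P2 r y"
proof -
  obtain d where "y = sh r d" using assms(3) unfolding SH_def by blast
  moreover obtain e \<kappa> where "\<kappa> > 0" "rho g (sh r d) = sh r e" "e (r + 1) = \<kappa> * d (r + 1)"
    using Ggrp_action_sh[of r g d] assms by auto
  ultimately show ?thesis using assms(1) by (auto simp: P2_sh)
qed

lemma P1_rho_Ggrp:
  assumes "g \<in> Ggrp r" "y \<in> SH r"
  shows "\<exists>\<kappa>>0. P1 (rho g y) = \<kappa> * P1 y"
proof (intro exI conjI)
  show "det g ^ 2 > 0" using det_Ggrp_nonzero[OF assms(1)] by simp
  show "P1 (rho g y) = det g ^ 2 * P1 y"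
    unfolding P1_def using det_rho[OF Ggrp_carrier[OF assms(1)] SH_carrier[OF assms(2)]] .
qed

section \<open>Normal form\<close>

lemma clear_middle_coordinates:
  assumes r: "r \<ge> 2" and d: "d (r + 1) \<noteq> 0" and "m \<le> r - 1"
  shows "\<exists>g\<in>Ggrp r. \<exists>e. rho g (sh r d) = sh r e \<and> e (r + 1) = d (r + 1)
           \<and> (\<forall>s. r + 1 - m \<le> s \<and> s \<le> r \<longrightarrow> e s = 0)"
  using assms(3)
proof (induction m)
  case 0
  show ?case using Ggrp.one by (intro bexI[of _ "1\<^sub>m r"] exI[of _ d]) (auto simp: rho_one)
next
  case (Suc m)
  then obtain g e where g: "g \<in> Ggrp r" "rho g (sh r d) = sh r e" "e (r + 1) = d (r + 1)"
      "\<forall>s. r + 1 - m \<le> s \<and> s \<le> r \<longrightarrow> e s = 0" by auto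
  define k where "k = Suc m"
  have k: "1 \<le> k" "k < r" using Suc.prems r unfolding k_def by auto
  define t where "t = - e (r + 1 - k) / ((real r - real k) * e (r + 1))"
  define U where "U = Tsum r (\<lambda>k'. if k' = k then t else 0) 0"
  obtain e' where e': "rho (mexp U) (sh r e) = sh r e'" "\<forall>s. r + 1 < s + k \<longrightarrow> e' s = e s"
      "e' (r + 1 - k) = e (r + 1 - k) + t * (real r - real k) * e (r + 1)"
    using rho_mexp_unipotent_sh[OF k] unfolding U_def by blast
  have U: "U \<in> gLie r" unfolding U_def using r by (simp add: Tsum_in_gLie)
  have "rho (mexp U * g) (sh r d) = rho (mexp U) (rho g (sh r d))"
    using U g(1) Ggrp_carrier gLie_carrier by (intro rho_mult) auto
  then have "rho (mexp U * g) (sh r d) = sh r e'" using g(2) e'(1) by simp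
  moreover have "e' (r + 1) = d (r + 1)" using e'(2) g(3) k by simp
  moreover have "e' s = 0" if s: "r + 1 - Suc m \<le> s" "s \<le> r" for s
  proof (cases "s = r + 1 - k")
    case True
    have "(real r - real k) * e (r + 1) \<noteq> 0" using k g(3) d by simp
    then show ?thesis using True e'(3) unfolding t_def by (simp add: field_simps)
  next
    case False
    then show ?thesis using e'(2) g(4) s k unfolding k_def by auto
  qed
  moreover have "mexp U * g \<in> Ggrp r" using Ggrp.step[OF U g(1)] .
  ultimately show ?case by blast
qed

definition sh_normal :: "nat \<Rightarrow> real \<Rightarrow> real \<Rightarrow> real mat" where
  "sh_normal r a b = sh r (\<lambda>s. if s = 1 then a else if s = r + 1 then b else 0)"

lemma sh_normal_SH: "sh_normal r a b \<in> SH r"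
  unfolding sh_normal_def SH_def by blast

lemma det_sh_normal:
  assumes "r \<ge> 2"
  shows "det (sh_normal r a b) = a * det (sh_normal r 1 b)"
proof -
  have "sh_normal r a b = multrow 0 a (sh_normal r 1 b)"
    using assms by (auto simp: sh_normal_def sh_entry mat_multrow_def intro!: eq_matI)
  then show ?thesis
    using det_multrow[of 0 r "sh_normal r 1 b" a] assms by (simp add: sh_normal_def)
qed

lemma exp_neg_ln_abs_mult: "(x::real) \<noteq> 0 \<Longrightarrow> exp (- ln \<bar>x\<bar>) * x = sgn x"
  by (simp add: exp_minus field_simps sgn_real_def)

lemma sgn_normalization:
  assumes r: "r \<ge> 2" and e1: "e 1 \<noteq> 0" and er: "e (r + 1) \<noteq> 0"
    and middle: "\<forall>s. 2 \<le> s \<and> s \<le> r \<longrightarrow> e s = 0"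
  shows "\<exists>h\<in>Ggrp r. rho h (sh r e) = sh_normal r (sgn (e 1)) (sgn (e (r + 1)))"
proof
  define \<alpha> where "\<alpha> = - ln \<bar>e 1\<bar>"
  define \<beta> where "\<beta> = - ln \<bar>e (r + 1)\<bar>"
  define D where "D = Tsum r (\<lambda>k. if k = 0 then (\<alpha> - \<beta>) / real r else 0) (\<beta> - \<alpha> / 2)"
  show "mexp D \<in> Ggrp r" unfolding D_def using r by (simp add: mexp_in_Ggrp Tsum_in_gLie)
  have "rho (mexp D) (sh r e) = sh r (\<lambda>s. exp ((\<alpha> - \<beta>) / real r * (2 * real r - real s + 1) + 2 * (\<beta> - \<alpha> / 2)) * e s)"
    unfolding D_def by (rule rho_mexp_diagonal_sh) (use r in simp)
  also have "\<dots> = sh_normal r (sgn (e 1)) (sgn (e (r + 1)))"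
    unfolding sh_normal_def
  proof (rule sh_cong)
    fix s assume s: "1 \<le> s" "s \<le> r + 1"
    consider "s = 1" | "s = r + 1" | "s \<noteq> 1" "s \<noteq> r + 1" by blast
    then show "exp ((\<alpha> - \<beta>) / real r * (2 * real r - real s + 1) + 2 * (\<beta> - \<alpha> / 2)) * e s
        = (if s = 1 then sgn (e 1) else if s = r + 1 then sgn (e (r + 1)) else 0)"
    proof cases
      case 1
      then show ?thesis using r exp_neg_ln_abs_mult[OF e1] by (simp add: \<alpha>_def field_simps)
    next
      case 2
      then show ?thesis using r exp_neg_ln_abs_mult[OF er] by (simp add: \<beta>_def field_simps)
    next
      case 3
      then show ?thesis using middle s by auto
    qed
  qed
  finally show "rho (mexp D) (sh r e) = sh_normal r (sgn (e 1)) (sgn (e (r + 1)))" .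
qed

lemma sh_normal_form:
  assumes r: "r \<ge> 2" and y: "y \<in> SH r" and p1: "P1 y \<noteq> 0" and p2: "P2 r y \<noteq> 0"
  shows "\<exists>g\<in>Ggrp r. \<exists>\<epsilon>\<in>{-1, 1}. rho g y = sh_normal r \<epsilon> (sgn (P2 r y))"
proof -
  obtain d where yd: "y = sh r d" using y unfolding SH_def by blast
  have d: "d (r + 1) \<noteq> 0" using p2 P2_sh[OF r] yd by simp
  obtain g e where g: "g \<in> Ggrp r" "rho g y = sh r e" "e (r + 1) = d (r + 1)"
      "\<forall>s. 2 \<le> s \<and> s \<le> r \<longrightarrow> e s = 0"
    using clear_middle_coordinates[where d = d and m = "r - 1", OF r d] yd r by auto
  have "sh r e = sh_normal r (e 1) (e (r + 1))"
    unfolding sh_normal_def by (rule sh_cong) (use g(4) in auto)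
  moreover have "P1 (sh r e) \<noteq> 0"
    using P1_rho_Ggrp[OF g(1) y] g(2) p1 by auto
  ultimately have e1: "e 1 \<noteq> 0"
    unfolding P1_def using det_sh_normal[OF r, of 0] by auto
  obtain h where h: "h \<in> Ggrp r" "rho h (sh r e) = sh_normal r (sgn (e 1)) (sgn (e (r + 1)))"
    using sgn_normalization[where e = e, OF r e1] g(3,4) d by auto
  have "rho (h * g) y = sh_normal r (sgn (e 1)) (sgn (P2 r y))"
    using rho_mult[of h r g y] h g Ggrp_carrier SH_carrier[OF y] P2_sh[OF r] yd by simp
  then show ?thesis
    using Ggrp_mult_closed[OF h(1) g(1)] e1 by (intro bexI[of _ "h * g"]) (auto simp: sgn_real_def)
qed

section \<open>Orbits of regular elements\<close>

lemma in_orbit_self: "y \<in> carrier_mat r r \<Longrightarrow> y \<in> orbit r y"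
  unfolding orbit_def using Ggrp.one rho_one by (metis image_eqI)

lemma in_orbit_if_rho_eq:
  assumes "g \<in> Ggrp r" "g' \<in> Ggrp r" "rho g y = rho g' y'"
    and "y \<in> carrier_mat r r" "y' \<in> carrier_mat r r"
  shows "y' \<in> orbit r y"
proof -
  obtain h where h: "h \<in> Ggrp r" "h * g' = 1\<^sub>m r" using Ggrp_left_inverse[OF assms(2)] by blast
  have c: "h \<in> carrier_mat r r" "g \<in> carrier_mat r r" "g' \<in> carrier_mat r r"
    using h(1) assms(1,2) Ggrp_carrier by auto
  have "rho (h * g) y = rho h (rho g' y')" using rho_mult[OF c(1,2) assms(4)] assms(3) by simp
  also have "\<dots> = y'" using rho_mult[OF c(1,3) assms(5)] h(2) rho_one[OF assms(5)] by simp
  finally show ?thesis unfolding orbit_def using Ggrp_mult_closed[OF h(1) assms(1)] by force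
qed

lemma sgn_eq_if_mult_pos: "0 < (a::real) * b \<Longrightarrow> sgn a = sgn b"
  by (auto simp: sgn_real_def zero_less_mult_iff)

lemma orbit_eq_sign_set:
  assumes r: "r \<ge> 2" and y: "y \<in> SH r" and p1: "P1 y \<noteq> 0" and p2: "P2 r y \<noteq> 0"
  shows "orbit r y = {y' \<in> SH r. P1 y * P1 y' > 0 \<and> P2 r y * P2 r y' > 0}"
proof (intro equalityI subsetI)
  fix z assume "z \<in> orbit r y"
  then obtain g where g: "g \<in> Ggrp r" "z = rho g y" unfolding orbit_def by blast
  obtain \<kappa>1 \<kappa>2 where "\<kappa>1 > 0" "P1 z = \<kappa>1 * P1 y" "\<kappa>2 > 0" "P2 r z = \<kappa>2 * P2 r y"
    using P1_rho_Ggrp[OF g(1) y] P2_rho_Ggrp[OF r g(1) y] g(2) by blast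
  then show "z \<in> {y' \<in> SH r. P1 y * P1 y' > 0 \<and> P2 r y * P2 r y' > 0}"
    using Ggrp_preserves_SH[OF _ g(1) y] g(2) r p1 p2 by (auto simp: zero_less_mult_iff mult_pos_neg)
next
  fix y' assume "y' \<in> {y' \<in> SH r. P1 y * P1 y' > 0 \<and> P2 r y * P2 r y' > 0}"
  then have y': "y' \<in> SH r" "P1 y * P1 y' > 0" "P2 r y * P2 r y' > 0" by auto
  obtain g \<epsilon> where g: "g \<in> Ggrp r" "\<epsilon> \<in> {-1, 1}" "rho g y = sh_normal r \<epsilon> (sgn (P2 r y))"
    using sh_normal_form[OF r y p1 p2] by blast
  have "P1 y' \<noteq> 0" "P2 r y' \<noteq> 0" using y'(2,3) by auto
  then obtain g' \<epsilon>' where g': "g' \<in> Ggrp r" "\<epsilon>' \<in> {-1, 1}" "rho g' y' = sh_normal r \<epsilon>' (sgn (P2 r y))"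
    using sh_normal_form[OF r y'(1)] sgn_eq_if_mult_pos[OF y'(3)] by metis
  define D where "D = det (sh_normal r 1 (sgn (P2 r y)))"
  obtain \<kappa> \<kappa>' where \<kappa>: "\<kappa> > 0" "\<epsilon> * D = \<kappa> * P1 y" "\<kappa>' > 0" "\<epsilon>' * D = \<kappa>' * P1 y'"
    using P1_rho_Ggrp[OF g(1) y] P1_rho_Ggrp[OF g'(1) y'(1)] g(3) g'(3)
      det_sh_normal[OF r, of \<epsilon>] det_sh_normal[OF r, of \<epsilon>']
    unfolding P1_def D_def by metis
  have "(\<epsilon> * \<epsilon>') * D ^ 2 = (\<epsilon> * D) * (\<epsilon>' * D)" by (simp add: power2_eq_square mult_ac)
  also have "\<dots> = (\<kappa> * \<kappa>') * (P1 y * P1 y')" unfolding \<kappa>(2,4) by (simp add: mult_ac)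
  finally have "0 < (\<epsilon> * \<epsilon>') * D ^ 2" using \<kappa>(1,3) y'(2) by simp
  then have "\<epsilon> * \<epsilon>' > 0" by (metis mult_nonpos_nonneg not_le zero_le_power2)
  then have "\<epsilon> = \<epsilon>'" using g(2) g'(2) by auto
  then show "y' \<in> orbit r y"
    using in_orbit_if_rho_eq[OF g(1) g'(1)] g(3) g'(3) SH_carrier y y'(1) by simp
qed

section \<open>Openness\<close>

lemma tendsto_det:
  fixes f :: "nat \<Rightarrow> real mat"
  assumes f: "\<And>k. f k \<in> carrier_mat n n" and z: "z \<in> carrier_mat n n"
    and lim: "\<And>i j. i < n \<Longrightarrow> j < n \<Longrightarrow> (\<lambda>k. f k $$ (i,j)) \<longlonglongrightarrow> z $$ (i,j)"
  shows "(\<lambda>k. det (f k)) \<longlonglongrightarrow> det z"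
proof -
  have "(\<lambda>k. \<Sum>p\<in>{p. p permutes {0..<n}}. signof p * (\<Prod>i=0..<n. f k $$ (i, p i)))
     \<longlonglongrightarrow> (\<Sum>p\<in>{p. p permutes {0..<n}}. signof p * (\<Prod>i=0..<n. z $$ (i, p i)))"
  proof (intro tendsto_sum tendsto_mult tendsto_const tendsto_prod)
    fix p i assume "p \<in> {p. p permutes {0..<n}}" "i \<in> {0..<n}"
    then have "i < n" "p i < n" using permutes_in_image by fastforce+
    then show "(\<lambda>k. f k $$ (i, p i)) \<longlonglongrightarrow> z $$ (i, p i)" by (rule lim)
  qed
  then show ?thesis using det_def'[OF f] det_def'[OF z] by simp
qed

lemma open_SH_sequentially:
  assumes U: "U \<subseteq> SH r"
    and seq: "\<And>f z. (\<And>k. f k \<in> SH r) \<Longrightarrow> z \<in> U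
      \<Longrightarrow> (\<And>i j. i < r \<Longrightarrow> j < r \<Longrightarrow> (\<lambda>k. f k $$ (i,j)) \<longlonglongrightarrow> z $$ (i,j))
      \<Longrightarrow> \<forall>\<^sub>F k in sequentially. f k \<in> U"
  shows "open_SH r U"
  unfolding open_SH_def
proof (intro conjI ballI U)
  fix z assume z: "z \<in> U"
  show "\<exists>e>0. \<forall>y'\<in>SH r. (\<forall>i<r. \<forall>j<r. \<bar>y' $$ (i,j) - z $$ (i,j)\<bar> < e) \<longrightarrow> y' \<in> U"
  proof (rule ccontr)
    assume "\<not> ?thesis"
    then have "\<forall>k. \<exists>y'\<in>SH r. (\<forall>i<r. \<forall>j<r. \<bar>y' $$ (i,j) - z $$ (i,j)\<bar> < inverse (real (Suc k))) \<and> y' \<notin> U"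
      by (metis inverse_positive_iff_positive of_nat_0_less_iff zero_less_Suc)
    then obtain f where f: "\<And>k. f k \<in> SH r" "\<And>k. f k \<notin> U"
      "\<And>k i j. i < r \<Longrightarrow> j < r \<Longrightarrow> \<bar>f k $$ (i,j) - z $$ (i,j)\<bar> < inverse (real (Suc k))"
      by metis
    have "(\<lambda>k. f k $$ (i,j)) \<longlonglongrightarrow> z $$ (i,j)" if "i < r" "j < r" for i j
    proof (rule LIMSEQ_I)
      fix e :: real assume "e > 0"
      then obtain N where "inverse (real (Suc N)) < e" using reals_Archimedean by blast
      then have "\<forall>k\<ge>N. norm (f k $$ (i,j) - z $$ (i,j)) < e"
        using f(3)[OF that] by (smt (verit) le_imp_inverse_le of_nat_0_less_iff of_nat_mono
            real_norm_def Suc_le_mono zero_less_Suc)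
      then show "\<exists>N. \<forall>k\<ge>N. norm (f k $$ (i,j) - z $$ (i,j)) < e" by blast
    qed
    then have "\<forall>\<^sub>F k in sequentially. f k \<in> U" by (rule seq[OF f(1) z])
    then obtain N where "\<forall>k\<ge>N. f k \<in> U" unfolding eventually_sequentially by blast
    then show False using f(2) by blast
  qed
qed

lemma open_sign_set:
  assumes r: "r \<ge> 2"
  shows "open_SH r {y' \<in> SH r. P1 y * P1 y' > 0 \<and> P2 r y * P2 r y' > 0}"
proof (rule open_SH_sequentially)
  fix f z
  assume f: "\<And>k. f k \<in> SH r" and z: "z \<in> {y' \<in> SH r. P1 y * P1 y' > 0 \<and> P2 r y * P2 r y' > 0}"
    and lim: "\<And>i j. i < r \<Longrightarrow> j < r \<Longrightarrow> (\<lambda>k. f k $$ (i,j)) \<longlonglongrightarrow> z $$ (i,j)"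
  have "(\<lambda>k. P1 y * P1 (f k)) \<longlonglongrightarrow> P1 y * P1 z"
    unfolding P1_def by (intro tendsto_mult tendsto_const tendsto_det[OF SH_carrier[OF f]] lim) (use z SH_carrier in auto)
  moreover have "(\<lambda>k. P2 r y * P2 r (f k)) \<longlonglongrightarrow> P2 r y * P2 r z"
    unfolding P2_def by (intro tendsto_mult tendsto_const lim) (use r in auto)
  ultimately have "\<forall>\<^sub>F k in sequentially. P1 y * P1 (f k) > 0 \<and> P2 r y * P2 r (f k) > 0"
    using z by (auto intro: eventually_conj order_tendstoD(1))
  then show "\<forall>\<^sub>F k in sequentially. f k \<in> {y' \<in> SH r. P1 y * P1 y' > 0 \<and> P2 r y * P2 r y' > 0}"
    using f by (auto elim: eventually_mono)
qed auto

section \<open>Density of regular elements\<close>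

lemma sh_normal_11_entry:
  assumes "r \<ge> 2" "i < r" "j < r"
  shows "sh_normal r 1 1 $$ (i,j) = (if j = (if i = 0 then 0 else r - i) then 1 else 0)"
  using assms by (auto simp: sh_normal_def sh_entry)

lemma sh_normal_11_involution:
  assumes r: "r \<ge> 2"
  shows "sh_normal r 1 1 * sh_normal r 1 1 = 1\<^sub>m r"
proof (rule eq_matI)
  fix i j assume "i < dim_row (1\<^sub>m r)" "j < dim_col (1\<^sub>m r)"
  then have ij: "i < r" "j < r" by auto
  define p where "p = (if i = 0 then 0 else r - i)"
  have p: "p < r" "(if p = 0 then 0 else r - p) = i" using ij r by (auto simp: p_def)
  have "(sh_normal r 1 1 * sh_normal r 1 1) $$ (i,j) = (\<Sum>c<r. sh_normal r 1 1 $$ (i,c) * sh_normal r 1 1 $$ (c,j))"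
    using ij by (intro index_mult_mat_sum) (auto simp: sh_normal_def)
  also have "\<dots> = (\<Sum>c<r. if c = p then sh_normal r 1 1 $$ (c,j) else 0)"
    using r ij by (intro sum.cong refl) (simp add: sh_normal_11_entry p_def)
  also have "\<dots> = sh_normal r 1 1 $$ (p,j)" using p by simp
  also have "\<dots> = 1\<^sub>m r $$ (i,j)" using sh_normal_11_entry[OF r p(1) ij(2)] p ij by auto
  finally show "(sh_normal r 1 1 * sh_normal r 1 1) $$ (i,j) = 1\<^sub>m r $$ (i,j)" .
qed (auto simp: sh_normal_def)

lemma det_sh_normal_11_nonzero:
  assumes "r \<ge> 2"
  shows "det (sh_normal r 1 1) \<noteq> 0"
proof -
  have "det (sh_normal r 1 1) * det (sh_normal r 1 1) = 1"
    using det_mult[of "sh_normal r 1 1" r "sh_normal r 1 1"] sh_normal_11_involution[OF assms]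
    by (simp add: sh_normal_def)
  then show ?thesis by auto
qed

lemma exists_regular_nearby:
  assumes r: "r \<ge> 2" and z: "z \<in> SH r" and e: "e > 0"
  shows "\<exists>z'\<in>SH r. (\<forall>i<r. \<forall>j<r. \<bar>z' $$ (i,j) - z $$ (i,j)\<bar> < e) \<and> P1 z' * P2 r z' \<noteq> 0"
proof -
  obtain d where zd: "z = sh r d" using z unfolding SH_def by blast
  define J where "J = sh_normal r 1 1"
  have J: "J \<in> carrier_mat r r" "J * J = 1\<^sub>m r" "det J \<noteq> 0"
    unfolding J_def using sh_normal_11_involution[OF r] det_sh_normal_11_nonzero[OF r]
    by (auto simp: sh_normal_def)
  have zc: "z \<in> carrier_mat r r" using zd by simp
  define A where "A = (-1) \<cdot>\<^sub>m (J * z)"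
  have A: "A \<in> carrier_mat r r" unfolding A_def using J zc by simp
  have "char_poly A \<noteq> 0"
    using degree_monic_char_poly[OF A] by (metis coeff_0 zero_neq_one)
  then have roots: "finite {t. poly (char_poly A) t = 0}" by (rule poly_roots_finite)
  have det_shift: "det (z + t \<cdot>\<^sub>m J) = det J * poly (char_poly A) t" for t
  proof -
    have "J * (J * z + t \<cdot>\<^sub>m 1\<^sub>m r) = J * (J * z) + J * (t \<cdot>\<^sub>m 1\<^sub>m r)"
      using J zc by (intro mult_add_distrib_mat) auto
    also have "J * (J * z) = (J * J) * z" using J zc by (intro assoc_mult_mat[symmetric]) auto
    also have "J * (t \<cdot>\<^sub>m 1\<^sub>m r) = t \<cdot>\<^sub>m J" using J by (simp add: mult_smult_distrib[of _ r r _ r])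
    finally have "z + t \<cdot>\<^sub>m J = J * (J * z + t \<cdot>\<^sub>m 1\<^sub>m r)" using J zc by simp
    then have "det (z + t \<cdot>\<^sub>m J) = det J * det (J * z + t \<cdot>\<^sub>m 1\<^sub>m r)"
      using J zc by (simp add: det_mult[of _ r])
    moreover have "J * z + t \<cdot>\<^sub>m 1\<^sub>m r = - char_matrix A t"
      unfolding char_matrix_def A_def using J zc by (intro eq_matI) auto
    ultimately show ?thesis using char_poly_matrix[OF A] by simp
  qed
  obtain t where t: "0 < t" "t < e" "poly (char_poly A) t \<noteq> 0" "d (r + 1) + t \<noteq> 0"
  proof -
    have "infinite ({0<..<e} - ({t. poly (char_poly A) t = 0} \<union> {- d (r + 1)}))"
      using Diff_infinite_finite[of "{t. poly (char_poly A) t = 0} \<union> {- d (r + 1)}" "{0<..<e}"] roots e by simp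
    then obtain t where "t \<in> {0<..<e} - ({t. poly (char_poly A) t = 0} \<union> {- d (r + 1)})"
      by (metis finite.emptyI ex_in_conv)
    then show thesis using that by auto
  qed
  define z' where "z' = z + t \<cdot>\<^sub>m J"
  have z'_sh: "z' = sh r (\<lambda>s. d s + t * (if s = 1 \<or> s = r + 1 then 1 else 0))"
    unfolding z'_def zd J_def sh_normal_def by (rule eq_matI) (auto simp: sh_entry)
  have "\<bar>z' $$ (i,j) - z $$ (i,j)\<bar> < e" if "i < r" "j < r" for i j
    using that t J zc sh_normal_11_entry[OF r that] by (simp add: z'_def J_def)
  moreover have "P1 z' \<noteq> 0" unfolding P1_def z'_def det_shift using J t by simp
  moreover have "P2 r z' \<noteq> 0" unfolding z'_sh using r t by (simp add: P2_sh)
  ultimately show ?thesis unfolding SH_def z'_sh by auto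
qed

lemma open_orbit_if_regular:
  assumes "r \<ge> 2" "y \<in> SH r" "P1 y * P2 r y \<noteq> 0"
  shows "open_SH r (orbit r y)"
  using orbit_eq_sign_set[OF assms(1,2)] open_sign_set[OF assms(1)] assms(3) by simp

lemma regular_if_open_orbit:
  assumes r: "r \<ge> 2" and y: "y \<in> SH r" and U: "open_SH r (orbit r y)"
  shows "P1 y * P2 r y \<noteq> 0"
proof
  assume sing: "P1 y * P2 r y = 0"
  obtain e where "e > 0" and ball: "\<forall>y'\<in>SH r. (\<forall>i<r. \<forall>j<r. \<bar>y' $$ (i,j) - y $$ (i,j)\<bar> < e) \<longrightarrow> y' \<in> orbit r y"
    using U in_orbit_self[OF SH_carrier[OF y]] unfolding open_SH_def by blast
  then obtain z where z: "z \<in> orbit r y" "P1 z * P2 r z \<noteq> 0"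
    using exists_regular_nearby[OF r y] by blast
  then obtain g where "g \<in> Ggrp r" "z = rho g y" unfolding orbit_def by blast
  then obtain \<kappa>1 \<kappa>2 where "P1 z = \<kappa>1 * P1 y" "P2 r z = \<kappa>2 * P2 r y"
    using P1_rho_Ggrp[OF _ y] P2_rho_Ggrp[OF r _ y] by blast
  then show False using sing z(2) by simp
qed

lemma in_open_orbit_iff_regular:
  assumes r: "r \<ge> 2" and y: "y \<in> SH r"
  shows "(\<exists>y0\<in>SH r. open_SH r (orbit r y0) \<and> y \<in> orbit r y0) \<longleftrightarrow> P1 y * P2 r y \<noteq> 0"
proof
  assume "\<exists>y0\<in>SH r. open_SH r (orbit r y0) \<and> y \<in> orbit r y0"
  then obtain y0 where y0: "y0 \<in> SH r" "open_SH r (orbit r y0)" "y \<in> orbit r y0" by blast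
  then have "P1 y0 * P2 r y0 \<noteq> 0" using regular_if_open_orbit[OF r] by blast
  then show "P1 y * P2 r y \<noteq> 0" using orbit_eq_sign_set[OF r y0(1)] y0(3) by auto
next
  assume "P1 y * P2 r y \<noteq> 0"
  then show "\<exists>y0\<in>SH r. open_SH r (orbit r y0) \<and> y \<in> orbit r y0"
    using open_orbit_if_regular[OF r y] in_orbit_self[OF SH_carrier[OF y]] y by blast
qed

theorem proposition1:
  fixes r :: nat
  assumes "r \<ge> 2"
  shows "(\<forall>y\<in>SH r. P1 y \<noteq> 0 \<and> P2 r y \<noteq> 0 \<longrightarrow>
            orbit r y = {y'\<in>SH r. P1 y * P1 y' > 0 \<and> P2 r y * P2 r y' > 0})
       \<and> (\<exists>y\<in>SH r. open_SH r (orbit r y))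
       \<and> SH r - \<Union>{orbit r y | y. y \<in> SH r \<and> open_SH r (orbit r y)}
           = {y\<in>SH r. P1 y * P2 r y = 0}"
proof (intro conjI)
  show "\<forall>y\<in>SH r. P1 y \<noteq> 0 \<and> P2 r y \<noteq> 0 \<longrightarrow>
          orbit r y = {y'\<in>SH r. P1 y * P1 y' > 0 \<and> P2 r y * P2 r y' > 0}"
    using orbit_eq_sign_set[OF assms] by blast
  have "P1 (sh_normal r 1 1) * P2 r (sh_normal r 1 1) \<noteq> 0"
    using det_sh_normal_11_nonzero[OF assms] P2_sh[OF assms] by (simp add: P1_def sh_normal_def)
  then show "\<exists>y\<in>SH r. open_SH r (orbit r y)"
    using open_orbit_if_regular[OF assms sh_normal_SH] sh_normal_SH by blast
  show "SH r - \<Union>{orbit r y | y. y \<in> SH r \<and> open_SH r (orbit r y)} = {y\<in>SH r. P1 y * P2 r y = 0}"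
    using in_open_orbit_iff_regular[OF assms] by blast
qed

end
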